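(* Let $(\mathcal{E},\mathcal{L},\mathcal{B})$ be a weakly left resolving labelled space with associated inverse semigroup $S$, let $\alpha\in\mathcal{L}^\infty$ and let $\{\mathcal{F}_n\}_{n\ge0}$ be an admissible family for $\alpha$. Then \[\xi=\bigcup_{n=0}^\infty\bigcup_{A\in\mathcal{F}_n}\uparrow(\alpha_{1,n},A,\alpha_{1,n})\] is a filter in $E(S)$.
   Context: A directed graph $\mathcal{E}=(\mathcal{E}^0,\mathcal{E}^1,r,s)$ has countable nonempty vertex set, edge set, range/source maps; paths satisfy $r(\lambda_i)=s(\lambda_{i+1})$. A labelled graph has a surjective labelling $\mathcal{L}:\mathcal{E}^1\to\mathcal{A}$ extended letterwise to finite and infinite paths. $\omega$ is the empty word, $\mathcal{L}^+=\bigcup_{n\ge1}\mathcal{L}(\mathcal{E}^n)$, $\mathcal{L}^*=\{\omega\}\cup\mathcal{L}^+$, $\mathcal{L}^\infty$ the labels of infinite paths; $\alpha_{i,j}=\alpha_i\cdots\alpha_j$, $\alpha_{1,0}=\omega$. For $A\subseteq\mathcal{E}^0$, $\alpha\in\mathcal{L}^+$: $r(A,\alpha)=\{r(\lambda):\mathcal{L}(\lambda)=\alpha,\ s(\lambda)\in A\}$, $r(A,\omega)=A$, $r(\alpha)=r(\mathcal{E}^0,\alpha)$. $\mathcal{B}$ accommodating: closed under $r(\cdot,\alpha)$, finite intersections and unions, contains $r(\alpha)$ for $\alpha\in\mathcal{L}^+$; labelled space $(\mathcal{E},\mathcal{L},\mathcal{B})$ weakly left resolving if $r(A\cap B,\alpha)=r(A,\alpha)\cap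 r(B,\alpha)$ for $A,B\in\mathcal{B}$, $\alpha\in\mathcal{L}^+$. $\mathcal{B}_\alpha=\mathcal{B}\cap\mathcal{P}(r(\alpha))$. $S$ = triples $(\alpha,A,\beta)$, $\alpha,\beta\in\mathcal{L}^*$, $\emptyset\ne A\in\mathcal{B}_\alpha\cap\mathcal{B}_\beta$, plus $0$; product $(\alpha,A,\beta)(\gamma,B,\delta)=(\alpha\gamma',r(A,\gamma')\cap B,\delta)$ if $\gamma=\beta\gamma'$, $=(\alpha,A\cap r(B,\beta'),\delta\beta')$ if $\beta=\gamma\beta'$, $=0$ otherwise (empty middle entry identified with $0$). $E(S)=\{(\alpha,A,\alpha)\}\cup\{0\}$, $p\le q$ iff $pq=p$; $(\alpha,A,\alpha)\le(\beta,B,\beta)$ iff $\alpha=\beta\alpha'$ and $A\subseteq r(B,\alpha')$; $\uparrow x=\{y:x\le y\}$. A filter in a poset with least element $0$ is a nonempty upward-closed subset not containing $0$ in which any two elements have a common lower bound in it. A family $\{\mathcal{F}_n\}_{n\ge0}$ with $\mathcal{F}_n$ a filter in $\mathcal{B}_{\alpha_{1,n}}$ for $n>0$ and $\mathcal{F}_0$ a filter in $\mathcal{B}$ or empty is admissible for $\alpha$ if $\mathcal{F}_n\subseteq\{A\in\mathcal{B}_{\alpha_{1,n}}:r(A,\alpha_{n+1})\in\mathcal{F}_{n+1}\}$ for all $n\ge0$. *)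

theory Defs
  imports Main "HOL-Library.Countable_Set"
begin

text \<open>A labelled graph: vertices, edges, range, source, labelling.
  The alphabet is the image of the labelling (so the labelling is surjective onto it).\<close>
record ('v, 'e, 'a) lgraph =
  verts :: "'v set"
  edges :: "'e set"
  rg :: "'e \<Rightarrow> 'v"
  sr :: "'e \<Rightarrow> 'v"
  lab :: "'e \<Rightarrow> 'a"

definition is_graph :: "('v, 'e, 'a) lgraph \<Rightarrow> bool" where
  "is_graph G \<longleftrightarrow> verts G \<noteq> {} \<and> countable (verts G) \<and> countable (edges G)
     \<and> rg G ` edges G \<subseteq> verts G \<and> sr G ` edges G \<subseteq> verts G"

definition is_path :: "('v, 'e, 'a) lgraph \<Rightarrow> 'e list \<Rightarrow> bool" where
  "is_path G p \<longleftrightarrow> p \<noteq> [] \<and> set p \<subseteq> edges G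
     \<and> (\<forall>i. Suc i < length p \<longrightarrow> rg G (p ! i) = sr G (p ! Suc i))"

definition labels_plus :: "('v, 'e, 'a) lgraph \<Rightarrow> 'a list set" where
  "labels_plus G = {map (lab G) p | p. is_path G p}"

definition labels_star :: "('v, 'e, 'a) lgraph \<Rightarrow> 'a list set" where
  "labels_star G = insert [] (labels_plus G)"

text \<open>Labels of infinite paths (indexed from 0: alpha_1 is alpha 0).\<close>
definition labels_inf :: "('v, 'e, 'a) lgraph \<Rightarrow> (nat \<Rightarrow> 'a) set" where
  "labels_inf G = {(\<lambda>i. lab G (p i)) | p.
      \<forall>i. p i \<in> edges G \<and> rg G (p i) = sr G (p (Suc i))}"

text \<open>alpha_{1,n} = alpha_1 ... alpha_n\<close>
definition seg :: "(nat \<Rightarrow> 'a) \<Rightarrow> nat \<Rightarrow> 'a list" where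
  "seg \<alpha> n = map \<alpha> [0..<n]"

definition rng :: "('v, 'e, 'a) lgraph \<Rightarrow> 'v set \<Rightarrow> 'a list \<Rightarrow> 'v set" where
  "rng G A w = (if w = [] then A else
     {rg G (last p) | p. is_path G p \<and> map (lab G) p = w \<and> sr G (hd p) \<in> A})"

definition rlab :: "('v, 'e, 'a) lgraph \<Rightarrow> 'a list \<Rightarrow> 'v set" where
  "rlab G w = rng G (verts G) w"

definition accommodating :: "('v, 'e, 'a) lgraph \<Rightarrow> 'v set set \<Rightarrow> bool" where
  "accommodating G B \<longleftrightarrow> B \<subseteq> Pow (verts G)
     \<and> (\<forall>A\<in>B. \<forall>w\<in>labels_plus G. rng G A w \<in> B)
     \<and> (\<forall>A\<in>B. \<forall>C\<in>B. A \<inter> C \<in> B \<and> A \<union> C \<in> B)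
     \<and> (\<forall>w\<in>labels_plus G. rlab G w \<in> B)"

definition weakly_left_resolving :: "('v, 'e, 'a) lgraph \<Rightarrow> 'v set set \<Rightarrow> bool" where
  "weakly_left_resolving G B \<longleftrightarrow>
     (\<forall>A\<in>B. \<forall>C\<in>B. \<forall>w\<in>labels_plus G. rng G (A \<inter> C) w = rng G A w \<inter> rng G C w)"

definition Bsub :: "('v, 'e, 'a) lgraph \<Rightarrow> 'v set set \<Rightarrow> 'a list \<Rightarrow> 'v set set" where
  "Bsub G B w = B \<inter> Pow (rlab G w)"

text \<open>Elements of S: None is 0, Some (a, A, b) is the triple (a, A, b).\<close>
type_synonym ('v, 'a) selem = "('a list \<times> 'v set \<times> 'a list) option"

definition Sset :: "('v, 'e, 'a) lgraph \<Rightarrow> 'v set set \<Rightarrow> ('v, 'a) selem set" where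
  "Sset G B = insert None {Some (a, A, b) | a A b. a \<in> labels_star G \<and> b \<in> labels_star G
       \<and> A \<in> Bsub G B a \<and> A \<in> Bsub G B b \<and> A \<noteq> {}}"

definition mk_triple :: "'a list \<Rightarrow> 'v set \<Rightarrow> 'a list \<Rightarrow> ('v, 'a) selem" where
  "mk_triple a X d = (if X = {} then None else Some (a, X, d))"

definition smult :: "('v, 'e, 'a) lgraph \<Rightarrow> ('v, 'a) selem \<Rightarrow> ('v, 'a) selem \<Rightarrow> ('v, 'a) selem" where
  "smult G p q = (case p of None \<Rightarrow> None | Some (a, A, b) \<Rightarrow>
     (case q of None \<Rightarrow> None | Some (c, C, d) \<Rightarrow>
       (if take (length b) c = b then
          mk_triple (a @ drop (length b) c) (rng G A (drop (length b) c) \<inter> C) d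
        else if take (length c) b = c then
          mk_triple a (A \<inter> rng G C (drop (length c) b)) (d @ drop (length c) b)
        else None)))"

definition ES :: "('v, 'e, 'a) lgraph \<Rightarrow> 'v set set \<Rightarrow> ('v, 'a) selem set" where
  "ES G B = insert None {Some (a, A, a) | a A. a \<in> labels_star G \<and> A \<in> Bsub G B a \<and> A \<noteq> {}}"

definition le_S :: "('v, 'e, 'a) lgraph \<Rightarrow> ('v, 'a) selem \<Rightarrow> ('v, 'a) selem \<Rightarrow> bool" where
  "le_S G p q \<longleftrightarrow> smult G p q = p"

definition upset :: "('v, 'e, 'a) lgraph \<Rightarrow> 'v set set \<Rightarrow> ('v, 'a) selem \<Rightarrow> ('v, 'a) selem set" where
  "upset G B x = {y \<in> ES G B. le_S G x y}"

definition filter_in :: "'p set \<Rightarrow> ('p \<Rightarrow> 'p \<Rightarrow> bool) \<Rightarrow> 'p \<Rightarrow> 'p set \<Rightarrow> bool" where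
  "filter_in P le z0 F \<longleftrightarrow> F \<subseteq> P \<and> F \<noteq> {} \<and> z0 \<notin> F
     \<and> (\<forall>x\<in>F. \<forall>y\<in>P. le x y \<longrightarrow> y \<in> F)
     \<and> (\<forall>x\<in>F. \<forall>y\<in>F. \<exists>z\<in>F. le z x \<and> le z y)"

definition admissible :: "('v, 'e, 'a) lgraph \<Rightarrow> 'v set set \<Rightarrow> (nat \<Rightarrow> 'a) \<Rightarrow> (nat \<Rightarrow> 'v set set) \<Rightarrow> bool" where
  "admissible G B \<alpha> F \<longleftrightarrow>
     (\<forall>n>0. filter_in (Bsub G B (seg \<alpha> n)) (\<subseteq>) {} (F n))
     \<and> (F 0 = {} \<or> filter_in B (\<subseteq>) {} (F 0))
     \<and> (\<forall>n. F n \<subseteq> {A \<in> Bsub G B (seg \<alpha> n). rng G A [\<alpha> n] \<in> F (Suc n)})"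

end

theory Submission
  imports Defs
begin

text \<open>A union of principal up-sets of a down-directed family of nonzero elements is a
  filter, so it suffices that the generators \<open>(\<alpha>\<^sub>1\<^sub>,\<^sub>n, A, \<alpha>\<^sub>1\<^sub>,\<^sub>n)\<close>, \<open>A \<in> F n\<close>, are down-directed.
  For \<open>n \<le> m\<close>, admissibility pushes \<open>A \<in> F n\<close> forward to a member of \<open>F m\<close> inside
  \<open>r(A, \<alpha>\<^sub>n\<^sub>+\<^sub>1 \<cdots> \<alpha>\<^sub>m)\<close>; meeting it with \<open>C \<in> F m\<close> inside the filter \<open>F m\<close> gives a common lower
  bound of the generators for \<open>A\<close> and \<open>C\<close>.\<close>

lemma filter_in_lower_bound: "filter_in P le z0 F \<Longrightarrow> x \<in> F \<Longrightarrow> y \<in> F \<Longrightarrow> \<exists>z\<in>F. le z x \<and> le z y"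
  unfolding filter_in_def by (elim conjE) blast

lemma filter_in_Union_upsets:
  assumes trans: "\<And>x y z. x \<in> P \<Longrightarrow> y \<in> P \<Longrightarrow> z \<in> P \<Longrightarrow> le x y \<Longrightarrow> le y z \<Longrightarrow> le x z"
    and gen: "Y \<subseteq> P" "Y \<noteq> {}"
    and refl: "\<And>y. y \<in> Y \<Longrightarrow> le y y"
    and nonzero: "\<And>y. y \<in> Y \<Longrightarrow> \<not> le y z0"
    and directed: "\<And>x y. x \<in> Y \<Longrightarrow> y \<in> Y \<Longrightarrow> \<exists>z\<in>Y. le z x \<and> le z y"
  shows "filter_in P le z0 (\<Union>y\<in>Y. {p \<in> P. le y p})"
  unfolding filter_in_def
proof (intro conjI ballI impI)
  let ?U = "\<Union>y\<in>Y. {p \<in> P. le y p}"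
  have Y_sub: "Y \<subseteq> ?U"
    using gen(1) refl by blast
  show "?U \<noteq> {}" using gen(2) Y_sub by blast
  show "?U \<subseteq> P" "z0 \<notin> ?U" using nonzero by auto
  show "y \<in> ?U" if "x \<in> ?U" "y \<in> P" "le x y" for x y
    using that gen(1) trans by blast
  fix x y assume "x \<in> ?U" "y \<in> ?U"
  then obtain x' y' where x: "x' \<in> Y" "x \<in> P" "le x' x" and y: "y' \<in> Y" "y \<in> P" "le y' y"
    by blast
  obtain z where z: "z \<in> Y" "le z x'" "le z y'"
    using directed x(1) y(1) by blast
  have "x' \<in> P" "y' \<in> P" "z \<in> P" using gen(1) x(1) y(1) z(1) by auto
  then have "le z x" "le z y"
    using trans[of z x' x] trans[of z y' y] x y z by simp_all
  then show "\<exists>z\<in>?U. le z x \<and> le z y" using Y_sub z(1) by blast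
qed

lemma rng_mono: "A \<subseteq> C \<Longrightarrow> rng G A w \<subseteq> rng G C w"
  by (auto simp: rng_def)

lemma is_path_append:
  assumes "is_path G p" "is_path G q" "rg G (last p) = sr G (hd q)"
  shows "is_path G (p @ q)"
  unfolding is_path_def
proof (intro conjI allI impI)
  show "p @ q \<noteq> []" "set (p @ q) \<subseteq> edges G"
    using assms by (auto simp: is_path_def)
  fix i assume i: "Suc i < length (p @ q)"
  consider "Suc i < length p" | "Suc i = length p" | "length p \<le> i"
    by linarith
  then show "rg G ((p @ q) ! i) = sr G ((p @ q) ! Suc i)"
  proof cases
    case 1
    then show ?thesis using assms(1) by (simp add: is_path_def nth_append)
  next
    case 2
    then have "(p @ q) ! i = last p"
      using assms(1) by (simp add: is_path_def nth_append last_conv_nth flip: 2)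
    moreover have "(p @ q) ! Suc i = hd q"
      using 2 assms(2) by (simp add: is_path_def nth_append hd_conv_nth)
    ultimately show ?thesis using assms(3) by simp
  next
    case 3
    then have "Suc (i - length p) < length q" using i by auto
    then show ?thesis using assms(2) 3 by (simp add: is_path_def nth_append Suc_diff_le)
  qed
qed

lemma rng_rng_subset: "rng G (rng G A u) v \<subseteq> rng G A (u @ v)"
proof (cases "u = [] \<or> v = []")
  case True
  then show ?thesis by (auto simp: rng_def)
next
  case False
  show ?thesis
  proof
    fix x assume "x \<in> rng G (rng G A u) v"
    then obtain q where q: "is_path G q" "map (lab G) q = v" "sr G (hd q) \<in> rng G A u" "x = rg G (last q)"
      using False by (auto simp: rng_def)
    then obtain p where p: "is_path G p" "map (lab G) p = u" "sr G (hd p) \<in> A" "sr G (hd q) = rg G (last p)"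
      using False by (auto simp: rng_def)
    have "is_path G (p @ q)" using is_path_append p q by metis
    moreover have "p \<noteq> []" "q \<noteq> []" using p q by (auto simp: is_path_def)
    ultimately show "x \<in> rng G A (u @ v)"
      using p q False unfolding rng_def by (auto intro!: exI[of _ "p @ q"])
  qed
qed

lemma le_S_idem_iff:
  assumes "A \<noteq> {}"
  shows "le_S G (Some (a, A, a)) (Some (b, C, b)) \<longleftrightarrow> (\<exists>a'. a = b @ a' \<and> A \<subseteq> rng G C a')"
proof
  assume le: "le_S G (Some (a, A, a)) (Some (b, C, b))"
  show "\<exists>a'. a = b @ a' \<and> A \<subseteq> rng G C a'"
  proof (cases "take (length a) b = a")
    case True
    with le have "mk_triple (a @ drop (length a) b) (rng G A (drop (length a) b) \<inter> C) b = Some (a, A, a)"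
      by (simp add: le_S_def smult_def)
    then have "b = a" "A \<inter> C = A"
      by (auto simp: mk_triple_def rng_def split: if_splits)
    then show ?thesis by (intro exI[of _ "[]"]) (auto simp: rng_def)
  next
    case False
    with le have prefix: "take (length b) a = b"
      by (auto simp: le_S_def smult_def split: if_splits)
    with le False have "mk_triple a (A \<inter> rng G C (drop (length b) a)) (b @ drop (length b) a) = Some (a, A, a)"
      by (simp add: le_S_def smult_def)
    then have "A \<subseteq> rng G C (drop (length b) a)"
      by (auto simp: mk_triple_def split: if_splits)
    moreover have "a = b @ drop (length b) a" using prefix by (metis append_take_drop_id)
    ultimately show ?thesis by blast
  qed
next
  assume "\<exists>a'. a = b @ a' \<and> A \<subseteq> rng G C a'"
  then obtain a' where a: "a = b @ a'" and sub: "A \<subseteq> rng G C a'" by blast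
  show "le_S G (Some (a, A, a)) (Some (b, C, b))"
  proof (cases "a' = []")
    case True
    then show ?thesis using a sub assms
      by (auto simp: le_S_def smult_def mk_triple_def rng_def Int_absorb2)
  next
    case False
    then have "take (length a) b \<noteq> a" using a by (metis append_self_conv length_append take_all_iff le_add1)
    then show ?thesis using a sub assms
      by (auto simp: le_S_def smult_def mk_triple_def Int_absorb2)
  qed
qed

lemma le_S_refl: "x \<in> ES G B \<Longrightarrow> le_S G x x"
  by (auto simp: ES_def le_S_def smult_def mk_triple_def rng_def split: if_split_asm)

lemma le_S_Some_None: "\<not> le_S G (Some x) None"
  by (simp add: le_S_def smult_def)

lemma le_S_trans:
  assumes "x \<in> ES G B" "y \<in> ES G B" "z \<in> ES G B" "le_S G x y" "le_S G y z"
  shows "le_S G x z"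
proof (cases x)
  case None
  then show ?thesis by (simp add: le_S_def smult_def)
next
  case (Some t)
  then obtain a A where x: "x = Some (a, A, a)" "A \<noteq> {}" using assms(1) by (auto simp: ES_def)
  have "y \<noteq> None" using assms(4) x le_S_Some_None by metis
  then obtain b C where y: "y = Some (b, C, b)" "C \<noteq> {}" using assms(2) unfolding ES_def by blast
  have "z \<noteq> None" using assms(5) y le_S_Some_None by metis
  then obtain c D where z: "z = Some (c, D, c)" using assms(3) unfolding ES_def by blast
  obtain a' where a: "a = b @ a'" "A \<subseteq> rng G C a'"
    using assms(4) le_S_idem_iff[OF x(2)] unfolding x y by blast
  obtain b' where b: "b = c @ b'" "C \<subseteq> rng G D b'"
    using assms(5) le_S_idem_iff[OF y(2)] unfolding y z by blast
  have "A \<subseteq> rng G (rng G D b') a'" using a(2) rng_mono[OF b(2)] by (rule order_trans)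
  also have "\<dots> \<subseteq> rng G D (b' @ a')" by (rule rng_rng_subset)
  finally have "le_S G (Some (a, A, a)) (Some (c, D, c))"
    using le_S_idem_iff[OF x(2), of G a c D] a(1) b(1) by auto
  then show ?thesis by (simp add: x z)
qed

lemma seg_split: "n \<le> m \<Longrightarrow> seg \<alpha> m = seg \<alpha> n @ map \<alpha> [n..<m]"
  using upt_add_eq_append[of 0 n "m - n"] by (simp add: seg_def)

lemma seg_in_labels_star:
  assumes "\<alpha> \<in> labels_inf G"
  shows "seg \<alpha> n \<in> labels_star G"
proof (cases "n = 0")
  case True
  then show ?thesis by (simp add: seg_def labels_star_def)
next
  case False
  obtain p where p: "\<alpha> = (\<lambda>i. lab G (p i))" "\<forall>i. p i \<in> edges G \<and> rg G (p i) = sr G (p (Suc i))"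
    using assms by (auto simp: labels_inf_def)
  have "is_path G (map p [0..<n])" using p False by (auto simp: is_path_def)
  moreover have "seg \<alpha> n = map (lab G) (map p [0..<n])" by (simp add: seg_def p)
  ultimately show ?thesis by (auto simp: labels_star_def labels_plus_def)
qed

text \<open>For \<open>n = 0\<close> the filter \<open>F 0\<close> is only required to be a filter in \<open>B\<close>; it lies in
  \<open>B\<^sub>\<omega>\<close> by the admissibility inclusion.\<close>

lemma admissible_filter:
  assumes "admissible G B \<alpha> F" "A \<in> F m"
  shows "filter_in (Bsub G B (seg \<alpha> m)) (\<subseteq>) {} (F m)"
proof (cases "m = 0")
  case True
  have "F 0 = {} \<or> filter_in B (\<subseteq>) {} (F 0)" "F 0 \<subseteq> Bsub G B (seg \<alpha> 0)"
    using assms(1) unfolding admissible_def by blast+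
  then have "filter_in B (\<subseteq>) {} (F m)" "F m \<subseteq> Bsub G B (seg \<alpha> m)"
    using True assms(2) by auto
  then show ?thesis by (auto simp: filter_in_def Bsub_def)
next
  case False
  then show ?thesis using assms(1) unfolding admissible_def by blast
qed

lemma admissible_member:
  assumes "admissible G B \<alpha> F" "A \<in> F m"
  shows "A \<noteq> {}" "A \<in> Bsub G B (seg \<alpha> m)"
proof -
  have "F m \<subseteq> Bsub G B (seg \<alpha> m)" "{} \<notin> F m"
    using admissible_filter[OF assms] by (simp_all add: filter_in_def)
  then show "A \<noteq> {}" "A \<in> Bsub G B (seg \<alpha> m)" using assms(2) by auto
qed

lemma admissible_ex_subset_rng:
  assumes "admissible G B \<alpha> F" "A \<in> F n" "n \<le> m"
  shows "\<exists>A'\<in>F m. A' \<subseteq> rng G A (map \<alpha> [n..<m])"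
  using assms(3)
proof (induction m rule: dec_induct)
  case base
  then show ?case using assms(2) by (auto simp: rng_def)
next
  case (step m)
  then obtain A' where A': "A' \<in> F m" "A' \<subseteq> rng G A (map \<alpha> [n..<m])" by blast
  have "F m \<subseteq> {X \<in> Bsub G B (seg \<alpha> m). rng G X [\<alpha> m] \<in> F (Suc m)}"
    using assms(1) unfolding admissible_def by blast
  then have "rng G A' [\<alpha> m] \<in> F (Suc m)" using A'(1) by blast
  moreover have "rng G A' [\<alpha> m] \<subseteq> rng G A (map \<alpha> [n..<m] @ [\<alpha> m])"
    using rng_mono[OF A'(2)] rng_rng_subset by (rule order_trans)
  ultimately show ?case using step.hyps by auto
qed

lemma admissible_lower_bound:
  assumes "admissible G B \<alpha> F" "A \<in> F n" "C \<in> F m" "n \<le> m"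
  shows "\<exists>D\<in>F m. le_S G (Some (seg \<alpha> m, D, seg \<alpha> m)) (Some (seg \<alpha> n, A, seg \<alpha> n))
                 \<and> le_S G (Some (seg \<alpha> m, D, seg \<alpha> m)) (Some (seg \<alpha> m, C, seg \<alpha> m))"
proof -
  obtain A' where A': "A' \<in> F m" "A' \<subseteq> rng G A (map \<alpha> [n..<m])"
    using admissible_ex_subset_rng[OF assms(1,2,4)] by blast
  then obtain D where D: "D \<in> F m" "D \<subseteq> A'" "D \<subseteq> C"
    using filter_in_lower_bound[OF admissible_filter[OF assms(1,3)] A'(1) assms(3)] by blast
  have D_ne: "D \<noteq> {}" using admissible_member[OF assms(1) D(1)] by blast
  have "\<exists>w. seg \<alpha> m = seg \<alpha> n @ w \<and> D \<subseteq> rng G A w"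
    using seg_split[OF assms(4)] D(2) A'(2) by blast
  then have "le_S G (Some (seg \<alpha> m, D, seg \<alpha> m)) (Some (seg \<alpha> n, A, seg \<alpha> n))"
    by (rule le_S_idem_iff[OF D_ne, THEN iffD2])
  moreover have "\<exists>w. seg \<alpha> m = seg \<alpha> m @ w \<and> D \<subseteq> rng G C w"
    using D(3) by (intro exI[of _ "[]"]) (simp add: rng_def)
  then have "le_S G (Some (seg \<alpha> m, D, seg \<alpha> m)) (Some (seg \<alpha> m, C, seg \<alpha> m))"
    by (rule le_S_idem_iff[OF D_ne, THEN iffD2])
  ultimately show ?thesis using D(1) by blast
qed

lemma admissible_common_lower_bound:
  assumes "admissible G B \<alpha> F" "A \<in> F n" "C \<in> F m"
  shows "\<exists>k. \<exists>D\<in>F k. le_S G (Some (seg \<alpha> k, D, seg \<alpha> k)) (Some (seg \<alpha> n, A, seg \<alpha> n))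
                    \<and> le_S G (Some (seg \<alpha> k, D, seg \<alpha> k)) (Some (seg \<alpha> m, C, seg \<alpha> m))"
proof (cases "n \<le> m")
  case True
  then show ?thesis using admissible_lower_bound[OF assms] by (intro exI[of _ m])
next
  case False
  then show ?thesis using admissible_lower_bound[OF assms(1,3,2)] by (intro exI[of _ n]) auto
qed

theorem mainTheorem6:
  fixes G :: "('v, 'e, 'a) lgraph" and B :: "'v set set"
    and \<alpha> :: "nat \<Rightarrow> 'a" and F :: "nat \<Rightarrow> 'v set set"
  assumes "is_graph G"
    and "accommodating G B"
    and "weakly_left_resolving G B"
    and "\<alpha> \<in> labels_inf G"
    and "admissible G B \<alpha> F"
  shows "filter_in (ES G B) (le_S G) None
           (\<Union>n. \<Union>A\<in>F n. upset G B (Some (seg \<alpha> n, A, seg \<alpha> n)))"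
proof -
  let ?Y = "{Some (seg \<alpha> n, A, seg \<alpha> n) | n A. A \<in> F n}"
  have sub: "?Y \<subseteq> ES G B"
    using admissible_member[OF assms(5)] seg_in_labels_star[OF assms(4)] by (auto simp: ES_def)
  have "F 1 \<noteq> {}"
    using assms(5) unfolding admissible_def filter_in_def by simp
  then have nonempty: "?Y \<noteq> {}" by blast
  have nonzero: "\<not> le_S G y None" if "y \<in> ?Y" for y
    using that by (auto simp: le_S_Some_None)
  have directed: "\<exists>z\<in>?Y. le_S G z x \<and> le_S G z y" if xy: "x \<in> ?Y" "y \<in> ?Y" for x y
  proof -
    obtain n A m C where x: "x = Some (seg \<alpha> n, A, seg \<alpha> n)" "A \<in> F n"
      and y: "y = Some (seg \<alpha> m, C, seg \<alpha> m)" "C \<in> F m"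
      using xy by blast
    then show ?thesis using admissible_common_lower_bound[OF assms(5) x(2) y(2)] by blast
  qed
  have "filter_in (ES G B) (le_S G) None (\<Union>y\<in>?Y. {p \<in> ES G B. le_S G y p})"
    using le_S_trans sub nonempty le_S_refl[OF subsetD[OF sub]] nonzero directed
    by (rule filter_in_Union_upsets)
  moreover have "(\<Union>y\<in>?Y. {p \<in> ES G B. le_S G y p})
                   = (\<Union>n. \<Union>A\<in>F n. upset G B (Some (seg \<alpha> n, A, seg \<alpha> n)))"
    by (auto simp: upset_def)
  ultimately show ?thesis by simp
qed

end
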